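(* Let $r,n,k$ be positive integers with $k\geq 2$, $n\in F_r$, and $\omega(n)\geq k$. Then $Q_{k-1}(n)>\lambda_k(r)\,(P_k(n)-r)$.
   Context: For a positive integer $r$, $S_r$ is the multiplicative arithmetic function with $S_r(p^{\alpha})=0$ if $p\leq r$ and $S_r(p^{\alpha})=p^{\alpha-1}(p-r)$ if $p>r$, for all primes $p$ and positive integers $\alpha$. $B_r=\{n\in\mathbb{N}: S_r(n)>0\}$ (positive integers whose smallest prime factor exceeds $r$, together with $1$). $F_r$ is the set of $n\in B_r$ such that $S_r(n)<S_r(m)$ for all $m\in B_r$ with $m>n$. $\omega(n)$ is the number of distinct prime factors of $n$. $P_k(n)$ is the $k$-th largest prime divisor of $n$, and $Q_k(n)$ is the $k$-th smallest prime that is larger than $r$ and does not divide $n$. $r\#$ is the product of all primes $\leq r$ (with $1\#=1$). The Jacobsthal function $J(m)$ is the smallest positive integer $a$ such that every set of $a$ consecutive integers contains an element coprime to $m$; $J_r=J(r\#)$. $\lambda_k(r)$ is the unique positive real root of $\frac{J_r}{r}x^k+kx-(k-1)$. *)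

theory Defs
  imports Complex_Main "HOL-Computational_Algebra.Primes" "HOL-Library.Infinite_Set"
begin

definition S :: "nat \<Rightarrow> nat \<Rightarrow> int" where
  "S r n = (\<Prod>p\<in>prime_factors n.
      if p \<le> r then 0 else int p ^ (multiplicity p n - 1) * (int p - int r))"

definition B :: "nat \<Rightarrow> nat set" where
  "B r = {n. n > 0 \<and> S r n > 0}"

definition F :: "nat \<Rightarrow> nat set" where
  "F r = {n \<in> B r. \<forall>m \<in> B r. m > n \<longrightarrow> S r n < S r m}"

definition omega :: "nat \<Rightarrow> nat" where
  "omega n = card (prime_factors n)"

definition P :: "nat \<Rightarrow> nat \<Rightarrow> nat" where
  "P k n = rev (sorted_list_of_set (prime_factors n)) ! (k - 1)"

text \<open>k-th smallest prime larger than r not dividing n (k \<ge> 1); enumerate is 0-indexed.\<close>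
definition Q :: "nat \<Rightarrow> nat \<Rightarrow> nat \<Rightarrow> nat" where
  "Q r k n = enumerate {p. prime p \<and> p > r \<and> \<not> p dvd n} (k - 1)"

definition primorial :: "nat \<Rightarrow> nat" where
  "primorial r = \<Prod>{p. prime p \<and> p \<le> r}"

definition jacobsthal :: "nat \<Rightarrow> nat" where
  "jacobsthal m = (LEAST a. a > 0 \<and> (\<forall>x::int. \<exists>i<a. coprime (x + int i) (int m)))"

definition Jr :: "nat \<Rightarrow> nat" where
  "Jr r = jacobsthal (primorial r)"

definition lambda :: "nat \<Rightarrow> nat \<Rightarrow> real" where
  "lambda k r = (THE x. x > 0 \<and>
     real (Jr r) / real r * x ^ k + real k * x - (real k - 1) = 0)"

end

(* Suppose Q_{k-1}(n) <= lambda_k(r) (P_k(n) - r). Let Ps be the k largest prime factors of n and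
   Qs the k-1 smallest primes above r not dividing n. Then every q in Qs is at most lambda_k(r)
   times the gap P_k(n) - r, and the equation defining lambda_k(r) makes the interval
   (prod Ps / prod Qs, prod (p - r) / prod (q - r)] at least J_r long, so it contains an integer c
   coprime to r#. The number m = n c prod Qs / prod Ps then exceeds n and lies in B_r, while
   S_r(m) <= S_r(n) c prod (q - r) / prod (p - r) <= S_r(n), contradicting n in F_r. *)

theory Submission
  imports Defs
begin

lemma S_pos_iff:
  assumes "n > 0"
  shows "S r n > 0 \<longleftrightarrow> (\<forall>p\<in>prime_factors n. r < p)"
proof
  assume pos: "S r n > 0"
  show "\<forall>p\<in>prime_factors n. r < p"
  proof (rule ccontr)
    assume "\<not> (\<forall>p\<in>prime_factors n. r < p)"
    then obtain p where "p \<in> prime_factors n" "p \<le> r" by auto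
    then have "S r n = 0" unfolding S_def by (intro prod_zero) auto
    with pos show False by simp
  qed
next
  assume "\<forall>p\<in>prime_factors n. r < p"
  then show "S r n > 0" unfolding S_def by (intro prod_pos) auto
qed

lemma mem_B_iff: "n \<in> B r \<longleftrightarrow> n > 0 \<and> (\<forall>p\<in>prime_factors n. r < p)"
  unfolding B_def using S_pos_iff by auto

lemma S_eq_prod:
  assumes "n > 0" "\<forall>p\<in>prime_factors n. r < p"
  shows "real_of_int (S r n) = real n * (\<Prod>p\<in>prime_factors n. 1 - real r / real p)"
proof -
  have "real_of_int (S r n) =
      (\<Prod>p\<in>prime_factors n. real p ^ multiplicity p n * (1 - real r / real p))"
    unfolding S_def of_int_prod
  proof (rule prod.cong[OF refl])
    fix p assume p: "p \<in> prime_factors n"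
    then have "r < p" using assms(2) by blast
    moreover obtain a where "multiplicity p n = Suc a"
      using p assms(1) not0_implies_Suc by (auto simp: prime_factors_multiplicity)
    ultimately show "real_of_int (if p \<le> r then 0 else int p ^ (multiplicity p n - 1) * (int p - int r))
        = real p ^ multiplicity p n * (1 - real r / real p)"
      by (simp add: field_simps)
  qed
  also have "\<dots> = real (\<Prod>p\<in>prime_factors n. p ^ multiplicity p n) *
      (\<Prod>p\<in>prime_factors n. 1 - real r / real p)"
    by (simp add: prod.distrib of_nat_prod)
  finally show ?thesis
    using prime_factorization_nat[OF assms(1)] by simp
qed

lemma S_le_prod_subset:
  assumes "n > 0" "\<forall>p\<in>prime_factors n. r < p" "D \<subseteq> prime_factors n"
  shows "real_of_int (S r n) \<le> real n * (\<Prod>p\<in>D. 1 - real r / real p)"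
proof -
  let ?f = "\<lambda>p. 1 - real r / real p"
  have f01: "0 \<le> ?f p \<and> ?f p \<le> 1" if "p \<in> prime_factors n" for p
    using assms(2) that by auto
  have "prod ?f (prime_factors n) = prod ?f D * prod ?f (prime_factors n - D)"
    using prod.subset_diff[OF assms(3)] by (simp add: mult.commute)
  also have "\<dots> \<le> prod ?f D"
    using f01 assms(3) by (intro mult_right_le_one_le prod_nonneg prod_le_1) auto
  finally show ?thesis
    using S_eq_prod[OF assms(1,2)] by (simp add: mult_left_mono)
qed

lemma prod_prime_factors_dvd:
  fixes n :: nat
  assumes "n > 0" "Ps \<subseteq> prime_factors n"
  shows "\<Prod>Ps dvd n"
proof -
  have "(\<Prod>p\<in>Ps. p) dvd (\<Prod>p\<in>prime_factors n. p ^ multiplicity p n)"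
    using assms by (intro prod_dvd_prod_subset2[OF finite_set_mset])
      (auto simp: prime_factors_multiplicity dvd_power)
  then show ?thesis
    using prime_factorization_nat[OF assms(1)] by simp
qed

lemma prime_dvd_prod_primes_iff:
  fixes p :: nat
  assumes "prime p" "finite Qs" "\<forall>q\<in>Qs. prime q"
  shows "p dvd \<Prod>Qs \<longleftrightarrow> p \<in> Qs"
proof
  assume "p dvd \<Prod>Qs"
  then obtain q where "q \<in> Qs" "p dvd q" using assms by (auto simp: prime_dvd_prod_iff)
  then show "p \<in> Qs" using assms primes_dvd_imp_eq by blast
qed (use assms in \<open>auto intro: dvd_prodI\<close>)

lemma prod_mult_prod_one_minus_div:
  assumes "\<forall>p\<in>X. r < p"
  shows "real (\<Prod>X) * (\<Prod>p\<in>X. 1 - real r / real p) = (\<Prod>p\<in>X. real p - real r)"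
proof -
  have "real (\<Prod>X) * (\<Prod>p\<in>X. 1 - real r / real p) = (\<Prod>p\<in>X. real p * (1 - real r / real p))"
    by (simp add: of_nat_prod prod.distrib)
  also have "\<dots> = (\<Prod>p\<in>X. real p - real r)"
    using assms by (intro prod.cong) (auto simp: field_simps)
  finally show ?thesis .
qed

lemma prime_factors_exchange:
  fixes n n1 c :: nat
  assumes n: "n = n1 * \<Prod>Ps" "n > 0" and Ps: "Ps \<subseteq> prime_factors n"
    and Qs: "finite Qs" "\<forall>q\<in>Qs. prime q" and "c > 0"
  shows "(prime_factors n - Ps) \<union> Qs \<subseteq> prime_factors (n1 * \<Prod>Qs * c)"
    and "prime_factors (n1 * \<Prod>Qs * c) \<subseteq> prime_factors n \<union> Qs \<union> prime_factors c"
proof -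
  have m0: "n1 * \<Prod>Qs * c > 0" using n Qs \<open>c > 0\<close> by (auto intro!: prod_pos prime_gt_0_nat)
  show "(prime_factors n - Ps) \<union> Qs \<subseteq> prime_factors (n1 * \<Prod>Qs * c)"
  proof
    fix p assume "p \<in> (prime_factors n - Ps) \<union> Qs"
    moreover have "p dvd n1" if "p \<in> prime_factors n - Ps"
    proof -
      have "prime p" "p dvd n" "\<not> p dvd \<Prod>Ps"
        using that Ps prime_dvd_prod_primes_iff[of p Ps] finite_subset[OF Ps finite_set_mset]
        by auto
      then show ?thesis unfolding n by (auto simp: prime_dvd_mult_iff)
    qed
    ultimately have "prime p \<and> p dvd n1 * \<Prod>Qs * c"
      using Qs dvd_prodI[OF Qs(1), of p id] by (auto simp: in_prime_factors_iff)
    then show "p \<in> prime_factors (n1 * \<Prod>Qs * c)" using m0 by (auto simp: in_prime_factors_iff)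
  qed
  show "prime_factors (n1 * \<Prod>Qs * c) \<subseteq> prime_factors n \<union> Qs \<union> prime_factors c"
  proof
    fix p assume "p \<in> prime_factors (n1 * \<Prod>Qs * c)"
    then have p: "prime p" "p dvd n1 \<or> p dvd \<Prod>Qs \<or> p dvd c"
      by (auto simp: in_prime_factors_iff prime_dvd_mult_iff)
    then show "p \<in> prime_factors n \<union> Qs \<union> prime_factors c"
      using n \<open>c > 0\<close> prime_dvd_prod_primes_iff[OF p(1) Qs] by (auto simp: in_prime_factors_iff)
  qed
qed

lemma F_exchange:
  fixes n c r :: nat and Ps Qs :: "nat set"
  assumes n: "n \<in> F r" and Ps: "Ps \<subseteq> prime_factors n"
    and Qs: "finite Qs" "\<forall>q\<in>Qs. prime q \<and> r < q \<and> \<not> q dvd n"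
    and c: "c > 0" "\<forall>p\<in>prime_factors c. r < p"
    and larger: "\<Prod>Ps < c * \<Prod>Qs"
  shows "(\<Prod>p\<in>Ps. real p - real r) < real c * (\<Prod>q\<in>Qs. real q - real r)"
proof -
  let ?f = "\<lambda>p. 1 - real r / real p"
  have n0: "n > 0" and pfn: "\<forall>p\<in>prime_factors n. r < p"
    and Fmin: "\<forall>m\<in>B r. n < m \<longrightarrow> S r n < S r m"
    using n by (auto simp: F_def mem_B_iff)
  obtain n1 where n_eq: "n = n1 * \<Prod>Ps"
    using prod_prime_factors_dvd[OF n0 Ps] by (metis dvd_div_mult_self)
  define m where "m = n1 * \<Prod>Qs * c"
  define R where "R = prod ?f (prime_factors n - Ps)"
  have "\<forall>q\<in>Qs. prime q" using Qs(2) by blast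
  note exchange = prime_factors_exchange[OF n_eq n0 Ps Qs(1) this c(1), folded m_def]
  have n1_0: "n1 > 0" using n_eq n0 by (auto intro: gr0I)
  have m0: "m > 0" unfolding m_def using n1_0 Qs(2) c(1) by (auto intro!: prod_pos)
  have pfm: "\<forall>p\<in>prime_factors m. r < p" using exchange(2) pfn Qs(2) c(2) by blast
  have "n < m" using larger n1_0 unfolding n_eq m_def by (simp add: algebra_simps)
  then have "S r n < S r m" using Fmin m0 pfm by (auto simp: mem_B_iff)
  have "real_of_int (S r n) = real n * (R * prod ?f Ps)"
    unfolding S_eq_prod[OF n0 pfn] R_def
    by (simp add: prod.subset_diff[OF Ps finite_set_mset])
  also have "\<dots> = real n1 * R * (\<Prod>p\<in>Ps. real p - real r)"
    using prod_mult_prod_one_minus_div[of Ps r] Ps pfn unfolding n_eq by (auto simp: algebra_simps)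
  finally have Sn: "real_of_int (S r n) = real n1 * R * (\<Prod>p\<in>Ps. real p - real r)" .
  have disj: "(prime_factors n - Ps) \<inter> Qs = {}" using Qs(2) by auto
  have "real_of_int (S r m) \<le> real m * (R * prod ?f Qs)"
    using S_le_prod_subset[OF m0 pfm exchange(1)] unfolding R_def
    by (simp add: prod.union_disjoint[OF _ Qs(1) disj])
  also have "\<dots> = real n1 * R * (real c * (\<Prod>q\<in>Qs. real q - real r))"
    using prod_mult_prod_one_minus_div[of Qs r] Qs(2) unfolding m_def by (simp add: algebra_simps)
  finally have "real n1 * R * (\<Prod>p\<in>Ps. real p - real r)
      < real n1 * R * (real c * (\<Prod>q\<in>Qs. real q - real r))"
    using Sn \<open>S r n < S r m\<close> by linarith
  moreover have "R > 0" unfolding R_def using pfn by (intro prod_pos) auto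
  ultimately show ?thesis using n1_0 by simp
qed

lemma primorial_pos: "primorial r > 0"
  unfolding primorial_def by (intro prod_pos) (auto simp: prime_gt_0_nat)

lemma prime_factor_gt_if_coprime_primorial:
  assumes "coprime c (primorial r)" "p \<in> prime_factors c"
  shows "r < p"
proof (rule ccontr)
  assume "\<not> r < p"
  moreover have "finite {p::nat. prime p \<and> p \<le> r}" by (rule finite_subset[of _ "{..r}"]) auto
  ultimately have "p dvd primorial r"
    using assms(2) unfolding primorial_def by (intro dvd_prodI) auto
  moreover have "prime p" "p dvd c" using assms(2) by auto
  ultimately have "is_unit p" using coprime_common_divisor[OF assms(1)] by blast
  with \<open>prime p\<close> show False by simp
qed

lemma jacobsthal_covers:
  fixes m :: nat and x :: int
  assumes "m > 0"
  shows "jacobsthal m > 0" "\<exists>i<jacobsthal m. coprime (x + int i) (int m)"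
proof -
  have "\<exists>i<m. coprime (y + int i) (int m)" for y :: int
  proof -
    define i where "i = nat ((1 - y) mod int m)"
    have i_eq: "int i = (1 - y) mod int m" unfolding i_def using assms by simp
    then have "i < m" using assms by (metis of_nat_less_iff pos_mod_bound of_nat_0_less_iff)
    moreover have "(y + int i) mod int m = 1 mod int m" unfolding i_eq by (simp add: mod_simps)
    then have "coprime ((y + int i) mod int m) (int m)"
      using assms by (cases "m = 1") (auto simp: mod_pos_pos_trivial)
    then have "coprime (y + int i) (int m)" using assms coprime_mod_left_iff by auto
    ultimately show ?thesis by blast
  qed
  then have "\<exists>a. a > 0 \<and> (\<forall>y::int. \<exists>i<a. coprime (y + int i) (int m))"
    using assms by blast
  from LeastI_ex[OF this]
  show "jacobsthal m > 0" "\<exists>i<jacobsthal m. coprime (x + int i) (int m)"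
    unfolding jacobsthal_def by auto
qed

lemma exists_coprime_between:
  fixes X :: real and m :: nat
  assumes "m > 0" "X \<ge> 0"
  obtains c :: nat where "X < real c" "real c \<le> X + real (jacobsthal m)" "coprime c m"
proof -
  define x0 where "x0 = \<lfloor>X\<rfloor> + 1"
  obtain i where i: "i < jacobsthal m" "coprime (x0 + int i) (int m)"
    using jacobsthal_covers[OF assms(1)] by blast
  define c where "c = nat (x0 + int i)"
  have c_eq: "int c = x0 + int i" unfolding c_def x0_def using assms(2) by simp
  have "X < real c" "real c \<le> X + real (jacobsthal m)"
    using i(1) c_eq unfolding x0_def by linarith+
  moreover have "coprime c m" using i(2) c_eq by (metis coprime_int_iff)
  ultimately show ?thesis using that by blast
qed

lemma positive_root_unique:
  fixes a :: real
  assumes "a \<ge> 0" "k \<ge> 2"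
  shows "\<exists>!x. x > 0 \<and> a * x ^ k + real k * x - (real k - 1) = 0"
proof -
  define f where "f x = a * x ^ k + real k * x - (real k - 1)" for x :: real
  have mono: "f x < f y" if "0 \<le> x" "x < y" for x y
  proof -
    have "a * x ^ k \<le> a * y ^ k" using that assms(1) by (intro mult_left_mono power_mono) auto
    moreover have "real k * x < real k * y" using that assms(2) by simp
    ultimately show ?thesis unfolding f_def by linarith
  qed
  have "\<exists>x\<ge>0. x \<le> 1 \<and> f x = 0"
    using assms unfolding f_def by (intro IVT) (auto simp: power_0_left intro!: continuous_intros)
  then obtain x where x: "x \<ge> 0" "f x = 0" by blast
  moreover have "x \<noteq> 0" using x assms(2) unfolding f_def by (auto simp: power_0_left)
  ultimately have "x > 0 \<and> f x = 0" by simp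
  moreover have "y = x" if "y > 0 \<and> f y = 0" for y
    using mono[of y x] mono[of x y] that x by (cases y x rule: linorder_cases) auto
  ultimately show ?thesis unfolding f_def by blast
qed

lemma lambda_root:
  assumes "k \<ge> 2"
  shows "lambda k r > 0"
    "real (Jr r) / real r * lambda k r ^ k + real k * lambda k r - (real k - 1) = 0"
  using theI'[OF positive_root_unique[OF _ assms, of "real (Jr r) / real r"]]
  unfolding lambda_def by auto

lemma largest_prime_factors:
  assumes "k \<ge> 1" "omega n \<ge> k"
  shows "P k n \<in> prime_factors n"
    and "\<exists>Ps\<subseteq>prime_factors n. card Ps = k \<and> (\<forall>p\<in>Ps. P k n \<le> p)"
proof -
  define xs where "xs = rev (sorted_list_of_set (prime_factors n))"
  have set_xs: "set xs = prime_factors n" and "distinct xs" "sorted (rev xs)"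
    unfolding xs_def by simp_all
  have Pk: "P k n = xs ! (k - 1)" unfolding P_def xs_def ..
  have k: "k - 1 < length xs" using assms unfolding xs_def omega_def by simp
  show "P k n \<in> prime_factors n" unfolding Pk set_xs[symmetric] using k by simp
  have "set (take k xs) \<subseteq> prime_factors n" unfolding set_xs[symmetric] by (rule set_take_subset)
  moreover have "card (set (take k xs)) = k"
    using \<open>distinct xs\<close> k by (simp add: distinct_card)
  moreover have "P k n \<le> p" if p: "p \<in> set (take k xs)" for p
  proof -
    obtain i where "i < length (take k xs)" "take k xs ! i = p"
      using p unfolding in_set_conv_nth by blast
    then have "i \<le> k - 1" "p = xs ! i" by auto
    then show ?thesis unfolding Pk using sorted_rev_nth_mono[OF \<open>sorted (rev xs)\<close> _ k] by simp
  qed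
  ultimately show "\<exists>Ps\<subseteq>prime_factors n. card Ps = k \<and> (\<forall>p\<in>Ps. P k n \<le> p)" by blast
qed

lemma infinite_primes_not_dvd:
  assumes "n > 0"
  shows "infinite {p::nat. prime p \<and> r < p \<and> \<not> p dvd n}"
  unfolding infinite_nat_iff_unbounded_le
proof
  fix N
  obtain p where p: "prime p" "N + r + n < p" using bigger_prime by blast
  then have "\<not> p dvd n" using assms by (auto dest: dvd_imp_le)
  with p show "\<exists>p\<ge>N. p \<in> {p. prime p \<and> r < p \<and> \<not> p dvd n}" by (intro exI[of _ p]) auto
qed

lemma smallest_nondivisor_primes:
  assumes "n > 0" "k \<ge> 1"
  obtains Qs where "card Qs = k" "\<forall>q\<in>Qs. prime q \<and> r < q \<and> \<not> q dvd n \<and> q \<le> Q r k n"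
proof -
  define E where "E = {p::nat. prime p \<and> r < p \<and> \<not> p dvd n}"
  have inf: "infinite E" unfolding E_def using infinite_primes_not_dvd[OF assms(1)] .
  have Qk: "Q r k n = enumerate E (k - 1)" unfolding Q_def E_def ..
  have "card (enumerate E ` {..<k}) = k"
    using card_image[OF inj_on_subset[OF inj_enumerate[OF inf]]] by simp
  moreover have "q \<in> E \<and> q \<le> Q r k n" if "q \<in> enumerate E ` {..<k}" for q
    using that enumerate_in_set[OF inf] enumerate_mono_le_iff[OF inf] unfolding Qk by auto
  ultimately show ?thesis using that unfolding E_def by blast
qed

lemma one_minus_pow_mult_one_plus_le_one:
  fixes w :: real
  assumes "0 \<le> w" "w \<le> 1"
  shows "(1 - w) ^ m * (1 + real m * w) \<le> 1"
proof -
  have "(1 - w) ^ m * (1 + real m * w) \<le> (1 - w) ^ m * (1 + w) ^ m"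
    using Bernoulli_inequality[of w m] assms by (intro mult_left_mono) auto
  also have "\<dots> = (1 - w\<^sup>2) ^ m" by (simp add: power_mult_distrib[symmetric] power2_eq_square algebra_simps)
  also have "\<dots> \<le> 1" using assms by (intro power_le_one) (auto simp: power2_eq_square mult_le_one)
  finally show ?thesis .
qed

text \<open>The substitution \<open>w = (1 - L) v\<close> reduces both terms to the previous inequality.\<close>

lemma normalized_interval_inequality:
  fixes v L :: real
  assumes "0 \<le> v" "v \<le> 1" "0 < L" "real m - (real m + 1) * L \<ge> 0"
  shows "(1 + L * v) ^ Suc m * (1 - v) ^ m + (real m - (real m + 1) * L) * v * (1 - v) ^ m \<le> 1"
proof -
  define c where "c = real m - (real m + 1) * L"
  define w where "w = (1 - L) * v"
  have "L \<le> 1" using assms(4) by (smt (verit) mult_le_cancel_left1 of_nat_0_le_iff)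
  then have w: "0 \<le> w" "w \<le> 1" "w \<le> v" using assms unfolding w_def
    by (auto simp: mult_le_one mult_left_le_one_le)
  have "(1 + L * v) ^ Suc m * (1 - v) ^ m = (1 + L * v) * ((1 + L * v) * (1 - v)) ^ m"
    by (simp add: power_mult_distrib)
  also have "\<dots> \<le> (1 + L * v) * (1 - w) ^ m"
  proof (intro mult_left_mono power_mono)
    show "0 \<le> (1 + L * v) * (1 - v)" "0 \<le> 1 + L * v" using assms by auto
    show "(1 + L * v) * (1 - v) \<le> 1 - w" unfolding w_def using assms by (simp add: algebra_simps)
  qed
  finally have "(1 + L * v) ^ Suc m * (1 - v) ^ m + c * v * (1 - v) ^ m
      \<le> (1 + L * v) * (1 - w) ^ m + c * v * (1 - w) ^ m"
    using w assms unfolding c_def by (smt (verit) mult_left_mono power_mono zero_le_mult_iff)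
  also have "\<dots> = (1 - w) ^ m * (1 + real m * w)"
    unfolding w_def c_def by (simp add: algebra_simps)
  also have "\<dots> \<le> 1" using one_minus_pow_mult_one_plus_le_one[OF w(1,2)] .
  finally show ?thesis unfolding c_def .
qed

lemma interval_inequality:
  fixes L s r J :: real
  assumes "L > 0" "s > 0" "r > 0" "r \<le> L * s" "J \<ge> 0"
    and root: "J / r * L ^ Suc m + real (Suc m) * L - real m = 0"
  shows "(1 + r / s) ^ Suc m * (1 - r / (L * s)) ^ m + J * (L * s - r) ^ m / s ^ Suc m \<le> 1"
proof -
  define v where "v = r / (L * s)"
  have v: "0 \<le> v" "v \<le> 1" unfolding v_def using assms by (auto simp: field_simps)
  have c: "real m - (real m + 1) * L = J / r * L ^ Suc m" using root by (simp add: algebra_simps)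
  have "r / s = L * v" "1 - r / (L * s) = 1 - v" unfolding v_def using assms by (auto simp: field_simps)
  moreover have "J * (L * s - r) ^ m / s ^ Suc m = (real m - (real m + 1) * L) * v * (1 - v) ^ m"
  proof -
    have "L * s - r = L * s * (1 - v)" unfolding v_def using assms by (simp add: field_simps)
    then show ?thesis unfolding c v_def using assms by (simp add: field_simps power_mult_distrib)
  qed
  moreover have "real m - (real m + 1) * L \<ge> 0" unfolding c using assms by simp
  ultimately show ?thesis using normalized_interval_inequality[OF v assms(1)] by simp
qed

lemma prod_shifted_lower_bounds:
  fixes Ps :: "nat set" and r :: nat and s :: real
  assumes "s > 0" "\<forall>p\<in>Ps. real r + s \<le> real p"
  shows "s ^ card Ps \<le> (\<Prod>p\<in>Ps. real p - real r)"
    and "(\<Prod>p\<in>Ps. real p) / (\<Prod>p\<in>Ps. real p - real r) \<le> (1 + real r / s) ^ card Ps"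
proof -
  have "(\<Prod>p\<in>Ps. s) \<le> (\<Prod>p\<in>Ps. real p - real r)"
    using assms by (intro prod_mono) auto
  then show "s ^ card Ps \<le> (\<Prod>p\<in>Ps. real p - real r)" by simp
  have "(\<Prod>p\<in>Ps. real p) / (\<Prod>p\<in>Ps. real p - real r) = (\<Prod>p\<in>Ps. real p / (real p - real r))"
    by (simp add: prod_dividef)
  also have "\<dots> \<le> (\<Prod>p\<in>Ps. 1 + real r / s)"
  proof (rule prod_mono)
    fix p assume "p \<in> Ps"
    then have p: "real r + s \<le> real p" using assms(2) by blast
    then have "real p / (real p - real r) = 1 + real r / (real p - real r)"
      using assms(1) by (simp add: field_simps)
    also have "\<dots> \<le> 1 + real r / s" using p assms(1) by (simp add: frac_le)
    finally show "0 \<le> real p / (real p - real r) \<and> real p / (real p - real r) \<le> 1 + real r / s"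
      using p assms(1) by simp
  qed
  finally show "(\<Prod>p\<in>Ps. real p) / (\<Prod>p\<in>Ps. real p - real r) \<le> (1 + real r / s) ^ card Ps"
    by simp
qed

lemma prod_shifted_upper_bounds:
  fixes Qs :: "nat set" and r :: nat and u :: real
  assumes "\<forall>q\<in>Qs. r < q \<and> real q \<le> u"
  shows "(\<Prod>q\<in>Qs. real q - real r) \<le> (u - real r) ^ card Qs"
    and "(\<Prod>q\<in>Qs. real q - real r) / (\<Prod>q\<in>Qs. real q) \<le> (1 - real r / u) ^ card Qs"
proof -
  have "(\<Prod>q\<in>Qs. real q - real r) \<le> (\<Prod>q\<in>Qs. u - real r)"
    using assms by (intro prod_mono) auto
  then show "(\<Prod>q\<in>Qs. real q - real r) \<le> (u - real r) ^ card Qs" by simp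
  have "(\<Prod>q\<in>Qs. real q - real r) / (\<Prod>q\<in>Qs. real q) = (\<Prod>q\<in>Qs. 1 - real r / real q)"
    unfolding prod_dividef[symmetric] using assms by (intro prod.cong) (auto simp: field_simps)
  also have "\<dots> \<le> (\<Prod>q\<in>Qs. 1 - real r / u)"
    using assms by (intro prod_mono) (auto simp: frac_le)
  finally show "(\<Prod>q\<in>Qs. real q - real r) / (\<Prod>q\<in>Qs. real q) \<le> (1 - real r / u) ^ card Qs"
    by simp
qed

lemma prime_ratio_interval:
  fixes Ps Qs :: "nat set" and r J m :: nat and L s :: real
  assumes card: "card Ps = Suc m" "card Qs = m" and pos: "r > 0" "L > 0" "s > 0"
    and Ps: "\<forall>p\<in>Ps. real r + s \<le> real p"
    and Qs: "\<forall>q\<in>Qs. r < q \<and> real q \<le> L * s"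
    and root: "real J / real r * L ^ Suc m + real (Suc m) * L - real m = 0"
  shows "(\<Prod>p\<in>Ps. real p) / (\<Prod>q\<in>Qs. real q) + real J
    \<le> (\<Prod>p\<in>Ps. real p - real r) / (\<Prod>q\<in>Qs. real q - real r)"
proof -
  define A where "A = (\<Prod>p\<in>Ps. real p - real r)"
  define A' where "A' = (\<Prod>p\<in>Ps. real p)"
  define T where "T = (\<Prod>q\<in>Qs. real q - real r)"
  define T' where "T' = (\<Prod>q\<in>Qs. real q)"
  have "m \<noteq> 0"
  proof
    assume "m = 0"
    with root have "real J / real r * L + L = 0" by simp
    moreover have "real J / real r * L \<ge> 0" using pos by simp
    ultimately show False using pos by linarith
  qed
  then obtain q where "q \<in> Qs" using card(2) by (metis card.empty ex_in_conv)
  then have rL: "real r \<le> L * s" using Qs by force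
  have "A > 0" "A' > 0" unfolding A_def A'_def using Ps pos by (auto intro!: prod_pos)
  moreover have "T > 0" "T' > 0" unfolding T_def T'_def using Qs by (auto intro!: prod_pos)
  moreover have "(A' / A) * (T / T') \<le> (1 + real r / s) ^ Suc m * (1 - real r / (L * s)) ^ m"
    using prod_shifted_lower_bounds(2)[OF pos(3) Ps] prod_shifted_upper_bounds(2)[OF Qs]
      \<open>A > 0\<close> \<open>A' > 0\<close> \<open>T > 0\<close> \<open>T' > 0\<close> pos(3)
    unfolding A_def A'_def T_def T'_def card by (intro mult_mono) auto
  moreover have "real J * T / A \<le> real J * (L * s - real r) ^ m / s ^ Suc m"
  proof -
    have "real J * T / A \<le> real J * T / s ^ Suc m"
      using prod_shifted_lower_bounds(1)[OF pos(3) Ps] \<open>A > 0\<close> \<open>T > 0\<close> pos(3)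
      unfolding A_def T_def card by (intro divide_left_mono) auto
    also have "\<dots> \<le> real J * (L * s - real r) ^ m / s ^ Suc m"
      using prod_shifted_upper_bounds(1)[OF Qs] pos(3)
      unfolding T_def card by (intro divide_right_mono mult_left_mono) auto
    finally show ?thesis .
  qed
  ultimately have bound: "(A' / A) * (T / T') + real J * T / A \<le> 1"
    using interval_inequality[OF pos(2,3) _ rL _ root] pos(1) by simp
  have "A' / T' + real J = A / T * ((A' / A) * (T / T') + real J * T / A)"
    using \<open>A > 0\<close> \<open>T > 0\<close> \<open>T' > 0\<close> by (simp add: field_simps)
  also have "\<dots> \<le> A / T"
    using mult_left_mono[OF bound, of "A / T"] \<open>A > 0\<close> \<open>T > 0\<close> by simp
  finally show ?thesis unfolding A_def A'_def T_def T'_def .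
qed

theorem lemma3p3:
  fixes r n k :: nat
  assumes "r > 0" and "n > 0" and "k \<ge> 2"
    and "n \<in> F r" and "omega n \<ge> k"
  shows "real (Q r (k - 1) n) > lambda k r * (real (P k n) - real r)"
proof (rule ccontr)
  assume "\<not> ?thesis"
  then have small: "real (Q r (k - 1) n) \<le> lambda k r * (real (P k n) - real r)" by simp
  obtain m where k: "k = Suc m" "m \<ge> 1" using assms(3) by (cases k) auto
  have pfn: "\<forall>p\<in>prime_factors n. r < p" using assms(4) by (simp add: F_def mem_B_iff)
  obtain Ps where Ps: "Ps \<subseteq> prime_factors n" "card Ps = Suc m" "\<forall>p\<in>Ps. P k n \<le> p"
    using largest_prime_factors(2)[OF _ assms(5)] k by auto
  have "r < P k n" using largest_prime_factors(1)[OF _ assms(5)] pfn k by auto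
  obtain Qs where Qs: "card Qs = m" "\<forall>q\<in>Qs. prime q \<and> r < q \<and> \<not> q dvd n \<and> q \<le> Q r m n"
    using smallest_nondivisor_primes[OF assms(2) k(2)] by blast
  define X where "X = (\<Prod>p\<in>Ps. real p) / (\<Prod>q\<in>Qs. real q)"
  define A where "A = (\<Prod>p\<in>Ps. real p - real r)"
  define T where "T = (\<Prod>q\<in>Qs. real q - real r)"
  have interval: "X + real (Jr r) \<le> A / T"
    unfolding X_def A_def T_def
    using Ps Qs small lambda_root[OF assms(3)] \<open>r < P k n\<close> assms(1) k
    by (intro prime_ratio_interval[where s = "real (P k n) - real r" and L = "lambda k r"])
      (force intro: order_trans)+
  have "X \<ge> 0" unfolding X_def by (simp add: prod_nonneg)
  then obtain c where c: "X < real c" "real c \<le> X + real (Jr r)" "coprime c (primorial r)"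
    using exists_coprime_between[OF primorial_pos] unfolding Jr_def by blast
  have "A < real c * T" unfolding A_def T_def
  proof (rule F_exchange[OF assms(4) Ps(1)])
    show "finite Qs" "\<forall>q\<in>Qs. prime q \<and> r < q \<and> \<not> q dvd n"
      using Qs k by (auto intro: card_ge_0_finite)
    show "c > 0" "\<forall>p\<in>prime_factors c. r < p"
      using c(1,3) \<open>X \<ge> 0\<close> prime_factor_gt_if_coprime_primorial by auto
    have "(\<Prod>q\<in>Qs. real q) > 0" using Qs by (auto intro!: prod_pos)
    then have "real (\<Prod>Ps) < real (c * \<Prod>Qs)"
      using c(1) unfolding X_def by (simp add: of_nat_prod field_simps)
    then show "\<Prod>Ps < c * \<Prod>Qs" by linarith
  qed
  moreover have "T > 0" unfolding T_def using Qs by (auto intro!: prod_pos)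
  moreover have "real c \<le> A / T" using interval c(2) by linarith
  ultimately show False by (simp add: pos_le_divide_eq)
qed

end
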